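(* Let $q\in[1,2]$, $L\ge 2$, $\lambda>0$, and $f\in C^1(\mathbb{R}^n,\mathbb{R})$. Let $w_{1,t},\dots,w_{L,t}\in\mathbb{R}^n$ solve the steepest flow (without weight decay) $$d w_{i,t}=-\operatorname{sign}(\nabla_{w_i}F(w_t))\odot|\nabla_{w_i}F(w_t)|^{q-1}dt,\quad i\in[L],\qquad F(w)=f\left(\textstyle\prod_{i=1}^L w_i\right),$$ with an initialization that is $\lambda$-$L_p$-balanced with respect to the first parameter, i.e. $|w_{j,0}|^q-|w_{1,0}|^q=\lambda\mathbf{1}_n$ for all $j\in\{2,\dots,L\}$. Then there is a separable function $R_{L_p,L}$, depending only on the initialization and the reparameterization, such that $x_t=\prod_{i=1}^L w_{i,t}$ satisfies, almost everywhere, the separable $L_p$ steepest mirror flow $$d\,\nabla_x R_{L_p,L}(x_t)=-\operatorname{sign}(\nabla_x f(x_t))\odot|\nabla_x f(x_t)|^{q-1}dt,\qquad x_0=\prod_{i=1}^L w_{i,0}.$$ Moreover $R_{L_p,L}$ is a separable Bregman and Legendre function when $q\frac{L-1}{L}\le 1$, and for $L=2$ its Hessian is the diagonal matrix $$\nabla^2_x R_{L_p,2}(x)=\operatorname{diag}\left(\frac{1}{\sqrt{4|x_i|^q+\lambda^2}}\right)_{i\in[n]}.$$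
   Context: All vector operations are entrywise; $\mathbf 1_n$ is the all-ones vector; $q$ is dual to $p$ ($1/p+1/q=1$). A function $R$ is separable if $R(x)=\sum_i R_i(x_i)$. Legendre function: a differentiable convex $R:\mathbb{R}^n\to\mathbb{R}\cup\{\infty\}$ that is strictly convex on the interior of its domain and such that $\|\nabla R(x_i)\|_{L_2}\to\infty$ along any sequence $x_i$ tending to the boundary of $\operatorname{dom}R$. Bregman divergence: $D_R(x_1,x_2)=R(x_1)-R(x_2)-\langle\nabla R(x_2),x_1-x_2\rangle$. Bregman function: $\operatorname{dom}R$ closed, $R$ strictly convex and continuous on $\operatorname{dom}R$ and $C^1$ on its interior; for every $x\in\operatorname{dom}R$ and $\gamma\in\mathbb{R}$ the set $\{y:D_R(x,y)\le\gamma\}$ is bounded; and $D_R(x,x_i)\to0$ whenever $x_i\to x$ with $x_i$ in the interior of the domain. *)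

theory Defs
  imports "HOL-Analysis.Analysis"
begin

text \<open>Gradient of a real-valued function on R^n (meaningful where it is differentiable).\<close>
definition grad :: "(real^'n \<Rightarrow> real) \<Rightarrow> real^'n \<Rightarrow> real^'n" where
  "grad h x = (THE v. (h has_derivative (\<lambda>y. v \<bullet> y)) (at x))"

definition prodw :: "nat \<Rightarrow> (nat \<Rightarrow> real^'n) \<Rightarrow> real^'n" where
  "prodw L ws = (\<chi> k. \<Prod>i\<in>{1..L}. ws i $ k)"

definition stp :: "real \<Rightarrow> real^'n \<Rightarrow> real^'n" where
  "stp q v = (\<chi> k. sgn (v $ k) * \<bar>v $ k\<bar> powr (q - 1))"

definition separable :: "(real^'n \<Rightarrow> real) \<Rightarrow> bool" where
  "separable R \<longleftrightarrow> (\<exists>Ri :: 'n \<Rightarrow> real \<Rightarrow> real. \<forall>x. R x = (\<Sum>k\<in>UNIV. Ri k (x $ k)))"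

text \<open>Functions R^n -> R \<union> {\<infinity>} are modelled as ereal-valued functions never equal to -\<infinity>.\<close>
definition edom :: "(real^'n \<Rightarrow> ereal) \<Rightarrow> (real^'n) set" where
  "edom R = {x. R x \<noteq> \<infinity>}"

definition bregman_div :: "(real^'n \<Rightarrow> real) \<Rightarrow> real^'n \<Rightarrow> real^'n \<Rightarrow> real" where
  "bregman_div R x1 x2 = R x1 - R x2 - grad R x2 \<bullet> (x1 - x2)"

definition legendre_fun :: "(real^'n \<Rightarrow> ereal) \<Rightarrow> bool" where
  "legendre_fun R \<longleftrightarrow>
     (let D = edom R; Rr = (\<lambda>x. real_of_ereal (R x)) in
       (\<forall>x. R x \<noteq> -\<infinity>) \<and>
       convex D \<and>
       (\<forall>x\<in>D. \<forall>y\<in>D. \<forall>u\<in>{0..1}. Rr (u *\<^sub>R x + (1 - u) *\<^sub>R y) \<le> u * Rr x + (1 - u) * Rr y) \<and>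
       (\<forall>x\<in>interior D. Rr differentiable (at x)) \<and>
       (\<forall>x\<in>interior D. \<forall>y\<in>interior D. \<forall>u\<in>{0<..<1}. x \<noteq> y \<longrightarrow>
           Rr (u *\<^sub>R x + (1 - u) *\<^sub>R y) < u * Rr x + (1 - u) * Rr y) \<and>
       (\<forall>X z. (\<forall>i. X i \<in> interior D) \<longrightarrow> X \<longlonglongrightarrow> z \<longrightarrow> z \<in> frontier D \<longrightarrow>
           filterlim (\<lambda>i. norm (grad Rr (X i))) at_top sequentially))"

definition bregman_fun :: "(real^'n \<Rightarrow> ereal) \<Rightarrow> bool" where
  "bregman_fun R \<longleftrightarrow>
     (let D = edom R; Rr = (\<lambda>x. real_of_ereal (R x)) in
       (\<forall>x. R x \<noteq> -\<infinity>) \<and>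
       closed D \<and>
       convex D \<and>
       (\<forall>x\<in>D. \<forall>y\<in>D. \<forall>u\<in>{0<..<1}. x \<noteq> y \<longrightarrow>
           Rr (u *\<^sub>R x + (1 - u) *\<^sub>R y) < u * Rr x + (1 - u) * Rr y) \<and>
       continuous_on D Rr \<and>
       (\<forall>x\<in>interior D. Rr differentiable (at x)) \<and>
       continuous_on (interior D) (grad Rr) \<and>
       (\<forall>x\<in>D. \<forall>\<gamma>. bounded {y\<in>interior D. bregman_div Rr x y \<le> \<gamma>}) \<and>
       (\<forall>x\<in>D. \<forall>X. (\<forall>i. X i \<in> interior D) \<longrightarrow> X \<longlonglongrightarrow> x \<longrightarrow>
           (\<lambda>i. bregman_div Rr x (X i)) \<longlonglongrightarrow> 0))"

end

theory Submission
  imports Defs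
begin

(*
  Fix a coordinate k and write u_i for the k-th entry of w_i and g for the k-th partial derivative
  of f at the product x.  The flow reads u_i' = - sgn(g P_i) |g P_i|^(q-1), with P_i the product of
  the other factors, so all |u_i|^q have the same time derivative and their differences are
  conserved.  Under lambda-balance, |u_j|^q = a + lambda for j >= 2, where a = |u_1|^q; hence
  |x_k|^q = G(a) = a (a + lambda)^(L-1) and x_k' = - sgn(g) |g|^(q-1) G'(a).  Choosing
  R_k'' = 1 / G'(G^-1(|x_k|^q)) therefore gives d/dt R_k'(x_k) = - sgn(g) |g|^(q-1).
  R is strictly convex because R_k'' > 0.  When q (L-1)/L <= 1, R_k''(s) >= c / (1 + |s|), so R_k'
  is unbounded in both directions and the Bregman sublevel sets are bounded.  For L = 2,
  G'(a) = 2a + lambda = sqrt(4 G(a) + lambda^2).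
*)

section \<open>Signed powers and one-dimensional calculus\<close>

definition sgn_powr :: "real \<Rightarrow> real \<Rightarrow> real" where
  "sgn_powr q v = sgn v * \<bar>v\<bar> powr (q - 1)"

lemma stp_nth: "stp q v $ k = sgn_powr q (v $ k)"
  by (simp add: stp_def sgn_powr_def)

lemma sgn_powr_mult: "sgn_powr q (a * b) = sgn_powr q a * sgn_powr q b"
  by (simp add: sgn_powr_def sgn_mult abs_mult powr_mult)

lemma sgn_powr_mult_self: "sgn_powr q b * b = \<bar>b\<bar> powr q"
proof (cases "b = 0")
  case False
  then have "\<bar>b\<bar> powr (q - 1) * \<bar>b\<bar> = \<bar>b\<bar> powr q"
    by (simp add: powr_diff)
  then show ?thesis
    by (simp add: sgn_powr_def mult.commute[of "sgn b"] mult.assoc sgn_mult_abs abs_sgn)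
qed (simp add: sgn_powr_def)

lemma has_real_derivative_abs_powr:
  assumes "x \<noteq> 0 \<or> 1 < q"
  shows "((\<lambda>x. \<bar>x\<bar> powr q) has_real_derivative q * sgn_powr q x) (at x)"
proof (cases "x = 0")
  case False
  have "(norm has_derivative (\<lambda>h. sgn x * h)) (at x)"
    using has_derivative_norm[OF False] by (simp add: mult.commute)
  then have "(abs has_real_derivative sgn x) (at x)"
    by (simp add: has_field_derivative_def real_norm_def[abs_def])
  from DERIV_chain2[OF has_real_derivative_powr this] False show ?thesis
    by (simp add: sgn_powr_def mult_ac)
next
  case True
  with assms have "1 < q" by simp
  have "((\<lambda>y. (\<bar>y\<bar> powr q - \<bar>0\<bar> powr q) / (y - 0)) \<longlongrightarrow> 0) (at 0)"
  proof (rule Lim_null_comparison)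
    show "\<forall>\<^sub>F y in at 0. norm ((\<bar>y\<bar> powr q - \<bar>0\<bar> powr q) / (y - 0)) \<le> \<bar>y\<bar> powr (q - 1)"
      by (intro always_eventually allI) (simp add: abs_divide powr_diff)
    show "((\<lambda>y::real. \<bar>y\<bar> powr (q - 1)) \<longlongrightarrow> 0) (at 0)"
      using \<open>1 < q\<close> by (intro tendsto_zero_powrI) (auto intro!: tendsto_eq_intros)
  qed
  with True show ?thesis
    by (simp add: has_field_derivative_iff sgn_powr_def)
qed

lemma sgn_powr_1 [simp]: "sgn_powr 1 v = sgn v"
  by (simp add: sgn_powr_def)

lemma has_real_derivative_abs_at_zero:
  assumes "(u has_real_derivative 0) (at t within S)" and "u t = 0"
  shows "((\<lambda>s. \<bar>u s\<bar>) has_real_derivative 0) (at t within S)"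
proof -
  have "((\<lambda>s. (u s - u t) / (s - t)) \<longlongrightarrow> 0) (at t within S)"
    using assms(1) by (simp add: has_field_derivative_iff)
  then have "((\<lambda>s. \<bar>(u s - u t) / (s - t)\<bar>) \<longlongrightarrow> 0) (at t within S)"
    by (rule tendsto_rabs_zero)
  then have "((\<lambda>s. (\<bar>u s\<bar> - \<bar>u t\<bar>) / (s - t)) \<longlongrightarrow> 0) (at t within S)"
    by (rule Lim_null_comparison[rotated]) (use assms(2) in \<open>simp add: abs_divide\<close>)
  then show ?thesis
    by (simp add: has_field_derivative_iff)
qed

definition antideriv :: "(real \<Rightarrow> real) \<Rightarrow> real \<Rightarrow> real" where
  "antideriv g y = integral {0..y} g - integral {y..0} g"

lemma antideriv_0 [simp]: "antideriv g 0 = 0"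
  by (simp add: antideriv_def)

lemma has_real_derivative_antideriv:
  assumes "continuous_on UNIV g"
  shows "(antideriv g has_real_derivative g y) (at y)"
proof -
  define a where "a = min 0 y - 1"
  have integrable: "g integrable_on {a..b}" for b
    using continuous_on_subset[OF assms] by (intro integrable_continuous_real) auto
  have eq: "integral {a..x} g - integral {a..0} g = antideriv g x" if "a < x" for x
  proof (cases "0 \<le> x")
    case True
    have "integral {a..0} g + integral {0..x} g = integral {a..x} g"
      using True that integrable
      by (intro Henstock_Kurzweil_Integration.integral_combine) (auto simp: a_def)
    moreover have "integral {x..0} g = 0"
      using True by (cases "x = 0") auto
    ultimately show ?thesis
      by (simp add: antideriv_def)
  next
    case False
    have "integral {a..x} g + integral {x..0} g = integral {a..0} g"
      using False that integrable by (intro Henstock_Kurzweil_Integration.integral_combine) auto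
    then show ?thesis
      using False by (simp add: antideriv_def)
  qed
  have "((\<lambda>x. integral {a..x} g - integral {a..0} g) has_real_derivative g y) (at y)"
  proof -
    have "((\<lambda>x. integral {a..x} g) has_real_derivative g y) (at y within {a..y + 1})"
      using continuous_on_subset[OF assms]
      by (intro integral_has_real_derivative) (auto simp: a_def)
    then have "((\<lambda>x. integral {a..x} g) has_real_derivative g y) (at y)"
      by (subst (asm) at_within_Icc_at) (auto simp: a_def)
    then show ?thesis
      using DERIV_diff[OF _ DERIV_const, of "\<lambda>x. integral {a..x} g"] by simp
  qed
  then show ?thesis
    by (rule has_field_derivative_transform_within_open[where S = "{a<..}"])
      (use eq in \<open>auto simp: a_def\<close>)
qed

lemma has_derivative_vecI:
  fixes f :: "'a::real_normed_vector \<Rightarrow> real^'n"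
  assumes "\<And>k. ((\<lambda>x. f x $ k) has_derivative (\<lambda>h. f' h $ k)) (at a within S)"
  shows "(f has_derivative f') (at a within S)"
proof (rule has_derivative_componentwise_within[THEN iffD2], rule ballI)
  fix i :: "real^'n"
  assume "i \<in> Basis"
  then obtain k where "i = axis k 1"
    by (auto simp: Basis_vec_def)
  then show "((\<lambda>x. f x \<bullet> i) has_derivative (\<lambda>x. f' x \<bullet> i)) (at a within S)"
    using assms[of k] by (simp add: inner_axis)
qed

lemma has_vector_derivative_vecI:
  fixes f :: "real \<Rightarrow> real^'n"
  assumes "\<And>k. ((\<lambda>x. f x $ k) has_real_derivative f' $ k) (at a within S)"
  shows "(f has_vector_derivative f') (at a within S)"
  unfolding has_vector_derivative_def
proof (rule has_derivative_vecI)
  fix k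
  show "((\<lambda>x. f x $ k) has_derivative (\<lambda>h. (h *\<^sub>R f') $ k)) (at a within S)"
    using assms[of k] unfolding has_field_derivative_def
    by (rule has_derivative_eq_rhs) (simp add: fun_eq_iff)
qed

lemma has_real_derivative_vec_nth:
  fixes f :: "real \<Rightarrow> real^'n"
  assumes "(f has_vector_derivative f') F"
  shows "((\<lambda>x. f x $ k) has_real_derivative f' $ k) F"
  using bounded_linear.has_derivative[OF bounded_linear_vec_nth
      assms[unfolded has_vector_derivative_def]]
  unfolding has_field_derivative_def by (rule has_derivative_eq_rhs) (simp add: fun_eq_iff)

lemma grad_eqI:
  assumes "(h has_derivative (\<lambda>y. v \<bullet> y)) (at x)"
  shows "grad h x = v"
  unfolding grad_def
proof (rule the_equality)
  fix w
  assume "(h has_derivative (\<lambda>y. w \<bullet> y)) (at x)"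
  then have "(\<lambda>y. w \<bullet> y) = (\<lambda>y. v \<bullet> y)"
    using assms by (rule has_derivative_unique)
  then show "w = v"
    by (metis vector_eq_rdot)
qed (rule assms)

lemma has_derivative_grad:
  fixes h :: "real^'n \<Rightarrow> real"
  assumes "h differentiable (at x)"
  shows "(h has_derivative (\<lambda>y. grad h x \<bullet> y)) (at x)"
proof -
  obtain D where D: "(h has_derivative D) (at x)"
    using assms by (auto simp: differentiable_def)
  have "D = (\<lambda>y. adjoint D 1 \<bullet> y)"
    using adjoint_works[OF has_derivative_linear[OF D], of _ 1]
    by (simp add: fun_eq_iff inner_commute)
  with D have "(h has_derivative (\<lambda>y. adjoint D 1 \<bullet> y)) (at x)"
    by simp
  then show ?thesis
    using grad_eqI by metis
qed

lemma has_derivative_comp_vec_nth: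
  assumes "(g has_real_derivative g') (at (x $ k))"
  shows "((\<lambda>x. g (x $ k)) has_derivative (\<lambda>h. g' * h $ k)) (at x)"
  using has_derivative_compose[OF
      bounded_linear.has_derivative[OF bounded_linear_vec_nth has_derivative_ident]
      assms[unfolded has_field_derivative_def]]
  by simp

lemma deriv_zero_imp_frequently_small:
  fixes v v' :: "real \<Rightarrow> real"
  assumes "a < b" and t: "t \<in> {a..b}" and "0 < c"
    and deriv: "\<And>s. s \<in> {a..b} \<Longrightarrow> (v has_real_derivative v' s) (at s within {a..b})"
    and "v' t = 0"
  shows "\<exists>\<^sub>F s in at t within {a..b}. \<bar>v' s\<bar> < c"
proof (rule ccontr)
  assume "\<not> ?thesis"
  then obtain d where "0 < d"
    and large: "\<And>s. s \<in> {a..b} \<Longrightarrow> s \<noteq> t \<Longrightarrow> \<bar>s - t\<bar> < d \<Longrightarrow> c \<le> \<bar>v' s\<bar>"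
    by (auto simp: not_frequently eventually_at dist_real_def not_less)
  have "\<forall>\<^sub>F s in at t within {a..b}. c \<le> \<bar>(v s - v t) / (s - t)\<bar>"
    unfolding eventually_at
  proof (intro exI[of _ d] conjI ballI impI)
    fix s
    assume s: "s \<in> {a..b}" "s \<noteq> t \<and> dist s t < d"
    define l r where "l = min s t" and "r = max s t"
    have lr: "l < r" "{l..r} \<subseteq> {a..b}"
      using s t by (auto simp: l_def r_def)
    have "(v has_derivative (\<lambda>h. v' x * h)) (at x within {l..r})" if "x \<in> {l..r}" for x
      using deriv[of x] lr that
      by (auto simp: has_field_derivative_def intro: has_derivative_subset)
    then obtain \<xi> where \<xi>: "\<xi> \<in> {l<..<r}" "v r - v l = v' \<xi> * (r - l)"
      using mvt_simple[OF \<open>l < r\<close>, of v "\<lambda>x h. v' x * h"] by auto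
    have "(v s - v t) / (s - t) = v' \<xi>"
      using \<xi>(2) s by (cases "s < t") (auto simp: l_def r_def field_simps)
    moreover have "c \<le> \<bar>v' \<xi>\<bar>"
      using \<xi>(1) lr s by (intro large) (auto simp: l_def r_def dist_real_def)
    ultimately show "c \<le> \<bar>(v s - v t) / (s - t)\<bar>"
      by simp
  qed (rule \<open>0 < d\<close>)
  moreover have "((\<lambda>s. (v s - v t) / (s - t)) \<longlongrightarrow> 0) (at t within {a..b})"
    using deriv[OF t] \<open>v' t = 0\<close> by (simp add: has_field_derivative_iff)
  then have "((\<lambda>s. \<bar>(v s - v t) / (s - t)\<bar>) \<longlongrightarrow> 0) (at t within {a..b})"
    by (rule tendsto_rabs_zero)
  then have "\<forall>\<^sub>F s in at t within {a..b}. \<bar>(v s - v t) / (s - t)\<bar> < c"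
    using \<open>0 < c\<close> by (rule order_tendstoD(2))
  ultimately have "\<forall>\<^sub>F s in at t within {a..b}. False"
    by eventually_elim simp
  moreover have "at t within {a..b} \<noteq> bot"
    using \<open>a < b\<close> t by (simp add: trivial_limit_within)
  ultimately show False
    by (simp add: eventually_False)
qed

section \<open>Bregman and Legendre functions\<close>

lemma tangent_gap_pos:
  fixes g g' :: "real \<Rightarrow> real"
  assumes deriv: "\<And>x. (g has_real_derivative g' x) (at x)" and "strict_mono g'" and "a \<noteq> b"
  shows "0 < g a - g b - g' b * (a - b)"
proof (cases "a < b")
  case True
  then obtain \<xi> where "\<xi> < b" "g b - g a = (b - a) * g' \<xi>"
    using MVT2[OF True] deriv by blast
  moreover have "g' \<xi> < g' b"
    using \<open>strict_mono g'\<close> \<open>\<xi> < b\<close> by (simp add: strict_mono_less)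
  ultimately have "g a - g b - g' b * (a - b) = (b - a) * (g' b - g' \<xi>)"
    "0 < (b - a) * (g' b - g' \<xi>)"
    using True by (simp add: algebra_simps, simp)
  then show ?thesis
    by simp
next
  case False
  with \<open>a \<noteq> b\<close> have "b < a"
    by simp
  then obtain \<xi> where "b < \<xi>" "g a - g b = (a - b) * g' \<xi>"
    using MVT2[OF \<open>b < a\<close>] deriv by blast
  moreover have "g' b < g' \<xi>"
    using \<open>strict_mono g'\<close> \<open>b < \<xi>\<close> by (simp add: strict_mono_less)
  ultimately have "g a - g b - g' b * (a - b) = (a - b) * (g' \<xi> - g' b)"
    "0 < (a - b) * (g' \<xi> - g' b)"
    using \<open>b < a\<close> by (simp add: algebra_simps, simp)
  then show ?thesis
    by simp
qed

lemma tangent_gap_nonneg: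
  fixes g g' :: "real \<Rightarrow> real"
  assumes "\<And>x. (g has_real_derivative g' x) (at x)" and "strict_mono g'"
  shows "0 \<le> g a - g b - g' b * (a - b)"
  using tangent_gap_pos[OF assms, of a b] by (cases "a = b") auto

(* With gap(a,b) = g a - g b - g' b (a - b), this is the three-point identity
   gap(a,b) = gap(a,z) + gap(z,b) + (g' b - g' z) (z - a) with the first two terms dropped. *)
lemma tangent_gap_ge:
  fixes g g' :: "real \<Rightarrow> real"
  assumes "\<And>x. (g has_real_derivative g' x) (at x)" and "strict_mono g'"
  shows "(g' b - g' z) * (z - a) \<le> g a - g b - g' b * (a - b)"
  using tangent_gap_nonneg[OF assms, of a z] tangent_gap_nonneg[OF assms, of z b]
  by (simp add: algebra_simps)

lemma tangent_gap_sublevel_bounded: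
  fixes g g' :: "real \<Rightarrow> real"
  assumes "\<And>x. (g has_real_derivative g' x) (at x)" and "strict_mono g'"
    and "\<not> bdd_above (range g')" and "\<not> bdd_below (range g')"
  shows "\<exists>B. \<forall>b. g a - g b - g' b * (a - b) \<le> \<gamma> \<longrightarrow> \<bar>b\<bar> \<le> B"
proof -
  obtain b1 where b1: "\<gamma> + g' (a + 1) < g' b1"
    using assms(3) by (auto simp: bdd_above_def not_le)
  obtain b2 where b2: "g' b2 < g' (a - 1) - \<gamma>"
    using assms(4) by (auto simp: bdd_below_def not_le)
  have "\<bar>b\<bar> \<le> \<bar>b1\<bar> + \<bar>b2\<bar>" if "g a - g b - g' b * (a - b) \<le> \<gamma>" for b
  proof -
    have "g' b < g' b1"
      using tangent_gap_ge[OF assms(1,2), of b "a + 1" a] that b1 by simp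
    moreover have "g' b2 < g' b"
      using tangent_gap_ge[OF assms(1,2), of b "a - 1" a] that b2 by simp
    ultimately have "b2 < b" "b < b1"
      using \<open>strict_mono g'\<close> by (simp_all add: strict_mono_less)
    then show ?thesis
      by linarith
  qed
  then show ?thesis
    by blast
qed

lemma bregman_div_self [simp]: "bregman_div R x x = 0"
  by (simp add: bregman_div_def)

lemma strict_convex_if_bregman_div_pos:
  fixes R :: "real^'n \<Rightarrow> real"
  assumes pos: "\<And>x y. x \<noteq> y \<Longrightarrow> 0 < bregman_div R x y"
    and "x \<noteq> y" "0 < u" "u < 1"
  shows "R (u *\<^sub>R x + (1 - u) *\<^sub>R y) < u * R x + (1 - u) * R y"
proof -
  define z where "z = u *\<^sub>R x + (1 - u) *\<^sub>R y"
  have "x - z = (1 - u) *\<^sub>R (x - y)" "y - z = u *\<^sub>R (y - x)"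
    by (simp_all add: z_def algebra_simps)
  then have "x \<noteq> z" "y \<noteq> z"
    using assms(2-4) by auto
  then have "R z + grad R z \<bullet> (x - z) < R x" "R z + grad R z \<bullet> (y - z) < R y"
    using pos[OF \<open>x \<noteq> z\<close>] pos[OF \<open>y \<noteq> z\<close>] unfolding bregman_div_def by linarith+
  then have "u * (R z + grad R z \<bullet> (x - z)) < u * R x"
    "(1 - u) * (R z + grad R z \<bullet> (y - z)) < (1 - u) * R y"
    using assms(3,4) by simp_all
  moreover have "u * (grad R z \<bullet> (x - z)) + (1 - u) * (grad R z \<bullet> (y - z)) = 0"
    by (simp add: z_def algebra_simps inner_diff_right inner_add_right)
  ultimately show ?thesis
    unfolding z_def[symmetric] by (simp add: algebra_simps)
qed

lemma convex_if_bregman_div_pos: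
  fixes R :: "real^'n \<Rightarrow> real"
  assumes "\<And>x y. x \<noteq> y \<Longrightarrow> 0 < bregman_div R x y" and "0 \<le> u" "u \<le> 1"
  shows "R (u *\<^sub>R x + (1 - u) *\<^sub>R y) \<le> u * R x + (1 - u) * R y"
proof -
  consider "x = y" | "u = 0" | "u = 1" | "x \<noteq> y" "0 < u" "u < 1"
    using assms(2,3) by force
  then show ?thesis
  proof cases
    case 1
    then show ?thesis
      by (simp add: algebra_simps flip: scaleR_add_left)
  next
    case 4
    then show ?thesis
      using strict_convex_if_bregman_div_pos[OF assms(1)] by (simp add: less_imp_le)
  qed simp_all
qed

lemma legendre_fun_if_bregman_div_pos:
  fixes R :: "real^'n \<Rightarrow> real"
  assumes "\<And>x. R differentiable (at x)" and "\<And>x y. x \<noteq> y \<Longrightarrow> 0 < bregman_div R x y"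
  shows "legendre_fun (\<lambda>x. ereal (R x))"
  using assms convex_if_bregman_div_pos[OF assms(2)] strict_convex_if_bregman_div_pos[OF assms(2)]
  by (simp add: legendre_fun_def edom_def)

lemma bregman_fun_if_bregman_div_pos:
  fixes R :: "real^'n \<Rightarrow> real"
  assumes diff: "\<And>x. R differentiable (at x)" and cont: "continuous_on UNIV (grad R)"
    and pos: "\<And>x y. x \<noteq> y \<Longrightarrow> 0 < bregman_div R x y"
    and bounded: "\<And>x \<gamma>. bounded {y. bregman_div R x y \<le> \<gamma>}"
  shows "bregman_fun (\<lambda>x. ereal (R x))"
proof -
  have "isCont R x" for x
    using diff by (rule differentiable_imp_continuous_within)
  then have "continuous_on UNIV R"
    by (simp add: continuous_on_eq_continuous_at)
  moreover have "(\<lambda>i. bregman_div R x (X i)) \<longlonglongrightarrow> 0" if "X \<longlonglongrightarrow> x" for x X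
  proof -
    have "(\<lambda>i. bregman_div R x (X i)) \<longlonglongrightarrow> bregman_div R x x"
      unfolding bregman_div_def
      by (intro tendsto_intros that continuous_on_tendsto_compose[OF cont]
          continuous_on_tendsto_compose[OF \<open>continuous_on UNIV R\<close>]) auto
    then show ?thesis
      by simp
  qed
  ultimately show ?thesis
    using assms strict_convex_if_bregman_div_pos[OF pos] by (simp add: bregman_fun_def edom_def)
qed

section \<open>Separable potentials with positive Hessian\<close>

definition sep_potential :: "(real \<Rightarrow> real) \<Rightarrow> real^'n \<Rightarrow> real" where
  "sep_potential \<phi> x = (\<Sum>k\<in>UNIV. antideriv (antideriv \<phi>) (x $ k))"

lemma separable_sep_potential: "separable (sep_potential \<phi>)"
  unfolding separable_def sep_potential_def by (intro exI[of _ "\<lambda>_. antideriv (antideriv \<phi>)"]) simp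

locale positive_density =
  fixes \<phi> :: "real \<Rightarrow> real"
  assumes continuous: "continuous_on UNIV \<phi>" and pos: "\<And>s. 0 < \<phi> s"
begin

lemma deriv_antideriv: "(antideriv \<phi> has_real_derivative \<phi> s) (at s)"
  using continuous by (rule has_real_derivative_antideriv)

lemma deriv_antideriv2: "(antideriv (antideriv \<phi>) has_real_derivative antideriv \<phi> s) (at s)"
  by (intro has_real_derivative_antideriv continuous_at_imp_continuous_on ballI
      DERIV_isCont[OF deriv_antideriv])

lemma strict_mono_antideriv: "strict_mono (antideriv \<phi>)"
  unfolding strict_mono_def using deriv_antideriv pos by (blast intro: DERIV_pos_imp_increasing)

lemma has_derivative_sep_potential:
  "(sep_potential \<phi> has_derivative (\<lambda>h. (\<chi> k. antideriv \<phi> (x $ k)) \<bullet> h)) (at x)"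
proof -
  have "((\<lambda>x. \<Sum>k\<in>UNIV. antideriv (antideriv \<phi>) (x $ k)) has_derivative
      (\<lambda>h. \<Sum>k\<in>UNIV. antideriv \<phi> (x $ k) * h $ k)) (at x)"
    by (intro has_derivative_sum has_derivative_comp_vec_nth deriv_antideriv2)
  then show ?thesis
    by (simp add: sep_potential_def[abs_def] inner_vec_def)
qed

lemma differentiable_sep_potential: "sep_potential \<phi> differentiable (at x)"
  using has_derivative_sep_potential by (auto simp: differentiable_def)

lemma grad_sep_potential: "grad (sep_potential \<phi>) = (\<lambda>x. \<chi> k. antideriv \<phi> (x $ k))"
  using grad_eqI[OF has_derivative_sep_potential] by blast

lemma has_derivative_grad_sep_potential:
  "(grad (sep_potential \<phi>) has_derivative (\<lambda>h. \<chi> k. \<phi> (x $ k) * h $ k)) (at x)"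
  unfolding grad_sep_potential
  by (intro has_derivative_vecI) (simp add: has_derivative_comp_vec_nth deriv_antideriv)

lemma continuous_on_grad_sep_potential: "continuous_on UNIV (grad (sep_potential \<phi>))"
  by (intro continuous_at_imp_continuous_on ballI
      has_derivative_continuous[OF has_derivative_grad_sep_potential])

lemma bregman_div_sep_potential:
  "bregman_div (sep_potential \<phi>) x y =
    (\<Sum>k\<in>UNIV. antideriv (antideriv \<phi>) (x $ k) - antideriv (antideriv \<phi>) (y $ k)
      - antideriv \<phi> (y $ k) * (x $ k - y $ k))"
  by (simp add: bregman_div_def grad_sep_potential sep_potential_def inner_vec_def sum_subtractf)

lemma bregman_div_sep_potential_pos:
  assumes "x \<noteq> y"
  shows "0 < bregman_div (sep_potential \<phi>) x y"
proof -
  obtain k where "x $ k \<noteq> y $ k"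
    using assms by (auto simp: vec_eq_iff)
  then show ?thesis
    unfolding bregman_div_sep_potential
    using tangent_gap_pos[OF deriv_antideriv2 strict_mono_antideriv]
      tangent_gap_nonneg[OF deriv_antideriv2 strict_mono_antideriv]
    by (intro sum_pos2[where i = k]) auto
qed

lemma legendre_fun_sep_potential: "legendre_fun (\<lambda>x. ereal (sep_potential \<phi> x))"
  using differentiable_sep_potential bregman_div_sep_potential_pos
  by (rule legendre_fun_if_bregman_div_pos)

context
  assumes unbounded: "\<not> bdd_above (range (antideriv \<phi>))" "\<not> bdd_below (range (antideriv \<phi>))"
begin

lemma bounded_bregman_sublevel_sep_potential:
  "bounded {y. bregman_div (sep_potential \<phi>) x y \<le> \<gamma>}"
proof -
  let ?d = "\<lambda>a b. antideriv (antideriv \<phi>) a - antideriv (antideriv \<phi>) b - antideriv \<phi> b * (a - b)"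
  note nonneg = tangent_gap_nonneg[OF deriv_antideriv2 strict_mono_antideriv]
  have "\<forall>k. \<exists>Bk. \<forall>b. ?d (x $ k) b \<le> \<gamma> \<longrightarrow> \<bar>b\<bar> \<le> Bk"
    using tangent_gap_sublevel_bounded[OF deriv_antideriv2 strict_mono_antideriv unbounded] by blast
  then obtain B where B: "\<And>k b. ?d (x $ k) b \<le> \<gamma> \<Longrightarrow> \<bar>b\<bar> \<le> B k"
    by metis
  have "norm y \<le> (\<Sum>k\<in>UNIV. B k)" if "bregman_div (sep_potential \<phi>) x y \<le> \<gamma>" for y
  proof -
    have "?d (x $ k) (y $ k) \<le> \<gamma>" for k
      using that member_le_sum[of k UNIV "\<lambda>k. ?d (x $ k) (y $ k)"] nonneg
      unfolding bregman_div_sep_potential by simp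
    then have "(\<Sum>k\<in>UNIV. \<bar>y $ k\<bar>) \<le> (\<Sum>k\<in>UNIV. B k)"
      by (intro sum_mono B)
    then show ?thesis
      using norm_le_l1_cart[of y] by linarith
  qed
  then show ?thesis
    unfolding bounded_iff by blast
qed

lemma bregman_fun_sep_potential: "bregman_fun (\<lambda>x. ereal (sep_potential \<phi> x))"
  using differentiable_sep_potential continuous_on_grad_sep_potential
    bregman_div_sep_potential_pos bounded_bregman_sublevel_sep_potential
  by (rule bregman_fun_if_bregman_div_pos)

end

end

section \<open>The potential of a balanced product\<close>

lemma antideriv_ge_ln:
  assumes cont: "continuous_on UNIV \<phi>" and ge: "\<And>s. c / (1 + \<bar>s\<bar>) \<le> \<phi> s" and "0 \<le> b"
  shows "c * ln (1 + b) \<le> antideriv \<phi> b"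
proof -
  have "antideriv \<phi> 0 - c * ln (1 + 0) \<le> antideriv \<phi> b - c * ln (1 + b)"
  proof (rule DERIV_nonneg_imp_nondecreasing[OF \<open>0 \<le> b\<close>])
    fix x :: real
    assume "0 \<le> x"
    then have "((\<lambda>b. ln (1 + b)) has_real_derivative 1 / (1 + x)) (at x)"
      by (auto intro!: derivative_eq_intros)
    then have "((\<lambda>b. antideriv \<phi> b - c * ln (1 + b)) has_real_derivative
        \<phi> x - c * (1 / (1 + x))) (at x)"
      by (intro DERIV_diff DERIV_cmult has_real_derivative_antideriv[OF cont])
    moreover have "0 \<le> \<phi> x - c * (1 / (1 + x))"
      using ge[of x] \<open>0 \<le> x\<close> by simp
    ultimately show
      "\<exists>y. ((\<lambda>b. antideriv \<phi> b - c * ln (1 + b)) has_real_derivative y) (at x) \<and> 0 \<le> y"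
      by blast
  qed
  then show ?thesis
    by simp
qed

lemma antideriv_le_ln:
  assumes cont: "continuous_on UNIV \<phi>" and ge: "\<And>s. c / (1 + \<bar>s\<bar>) \<le> \<phi> s" and "b \<le> 0"
  shows "antideriv \<phi> b \<le> - c * ln (1 - b)"
proof -
  have "antideriv \<phi> b + c * ln (1 - b) \<le> antideriv \<phi> 0 + c * ln (1 - 0)"
  proof (rule DERIV_nonneg_imp_nondecreasing[OF \<open>b \<le> 0\<close>])
    fix x :: real
    assume "x \<le> 0"
    then have "((\<lambda>b. ln (1 - b)) has_real_derivative - 1 / (1 - x)) (at x)"
      by (auto intro!: derivative_eq_intros)
    then have "((\<lambda>b. antideriv \<phi> b + c * ln (1 - b)) has_real_derivative
        \<phi> x + c * (- 1 / (1 - x))) (at x)"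
      by (intro DERIV_add DERIV_cmult has_real_derivative_antideriv[OF cont])
    moreover have "0 \<le> \<phi> x + c * (- 1 / (1 - x))"
      using ge[of x] \<open>x \<le> 0\<close> by simp
    ultimately show
      "\<exists>y. ((\<lambda>b. antideriv \<phi> b + c * ln (1 - b)) has_real_derivative y) (at x) \<and> 0 \<le> y"
      by blast
  qed
  then show ?thesis
    by simp
qed

lemma antideriv_unbounded:
  assumes cont: "continuous_on UNIV \<phi>" and "0 < c" and ge: "\<And>s. c / (1 + \<bar>s\<bar>) \<le> \<phi> s"
  shows "\<not> bdd_above (range (antideriv \<phi>))" and "\<not> bdd_below (range (antideriv \<phi>))"
proof -
  show "\<not> bdd_above (range (antideriv \<phi>))"
  proof
    assume "bdd_above (range (antideriv \<phi>))"
    then obtain M where M: "\<And>b. antideriv \<phi> b \<le> M"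
      by (auto simp: bdd_above_def)
    define b where "b = exp (\<bar>M\<bar> / c + 1) - 1"
    have "0 \<le> b" "c * ln (1 + b) = \<bar>M\<bar> + c"
      using \<open>0 < c\<close> by (simp_all add: b_def algebra_simps)
    then show False
      using antideriv_ge_ln[OF cont ge \<open>0 \<le> b\<close>] M[of b] \<open>0 < c\<close> by linarith
  qed
  show "\<not> bdd_below (range (antideriv \<phi>))"
  proof
    assume "bdd_below (range (antideriv \<phi>))"
    then obtain M where M: "\<And>b. M \<le> antideriv \<phi> b"
      by (auto simp: bdd_below_def)
    define b where "b = 1 - exp (\<bar>M\<bar> / c + 1)"
    have "b \<le> 0" "- c * ln (1 - b) = - (\<bar>M\<bar> + c)"
      using \<open>0 < c\<close> by (simp_all add: b_def algebra_simps)
    then show False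
      using antideriv_le_ln[OF cont ge \<open>b \<le> 0\<close>] M[of b] \<open>0 < c\<close> by linarith
  qed
qed

(* For a lambda-balanced family with |w_1|^q = a, the product of the |w_j|^q is bal L lam a;
   bal_deriv is its derivative, the sum of the cofactor products (sum_cofactors_balanced).
   bal_inv inverts bal on [0, oo) and is only meaningful for nonnegative arguments. *)
definition bal :: "nat \<Rightarrow> real \<Rightarrow> real \<Rightarrow> real" where
  "bal L lam a = a * (a + lam) ^ (L - 1)"

definition bal_deriv :: "nat \<Rightarrow> real \<Rightarrow> real \<Rightarrow> real" where
  "bal_deriv L lam a = (a + lam) ^ (L - 1) + real (L - 1) * a * (a + lam) ^ (L - 2)"

definition bal_inv :: "nat \<Rightarrow> real \<Rightarrow> real \<Rightarrow> real" where
  "bal_inv L lam y = (THE a. 0 \<le> a \<and> bal L lam a = y)"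

definition mirror_hess :: "real \<Rightarrow> nat \<Rightarrow> real \<Rightarrow> real \<Rightarrow> real" where
  "mirror_hess q L lam s = 1 / bal_deriv L lam (bal_inv L lam (\<bar>s\<bar> powr q))"

abbreviation mirror_potential :: "real \<Rightarrow> nat \<Rightarrow> real \<Rightarrow> real^'n \<Rightarrow> real" where
  "mirror_potential q L lam \<equiv> sep_potential (mirror_hess q L lam)"

lemma continuous_on_bal: "continuous_on S (bal L lam)"
  unfolding bal_def by (intro continuous_intros)

lemma prod_balanced:
  assumes "1 \<le> L" "e 1 = a" "\<And>j. j \<in> {2..L} \<Longrightarrow> e j = a + lam"
  shows "(\<Prod>j\<in>{1..L}. e j) = bal L lam a"
proof -
  have "{1..L} = insert 1 {2..L}"
    using assms(1) by auto
  then have "(\<Prod>j\<in>{1..L}. e j) = a * (\<Prod>j\<in>{2..L}. a + lam)"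
    using assms(2,3) by simp
  then show ?thesis
    by (simp add: bal_def)
qed

lemma sum_cofactors_balanced:
  assumes "1 \<le> L" "e 1 = a" "\<And>j. j \<in> {2..L} \<Longrightarrow> e j = a + lam"
  shows "(\<Sum>i\<in>{1..L}. \<Prod>j\<in>{1..L}-{i}. e j) = bal_deriv L lam a"
proof -
  have "(\<Prod>j\<in>{1..L}-{1}. e j) = (a + lam) ^ (L - 1)"
  proof -
    have "{1..L} - {1} = {2..L}"
      by auto
    then show ?thesis
      using assms(3) by simp
  qed
  moreover have "(\<Prod>j\<in>{1..L}-{i}. e j) = a * (a + lam) ^ (L - 2)" if i: "i \<in> {2..L}" for i
  proof -
    have "{1..L} - {i} = insert 1 ({2..L} - {i})"
      using i by auto
    then have "(\<Prod>j\<in>{1..L}-{i}. e j) = a * (\<Prod>j\<in>{2..L}-{i}. a + lam)"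
      using assms(2,3) by simp
    then show ?thesis
      using i by (simp add: card_Diff_singleton numeral_2_eq_2)
  qed
  moreover have "(\<Sum>i\<in>{1..L}. \<Prod>j\<in>{1..L}-{i}. e j) =
      (\<Prod>j\<in>{1..L}-{1}. e j) + (\<Sum>i\<in>{2..L}. \<Prod>j\<in>{1..L}-{i}. e j)"
    using assms(1) by (simp add: sum.atLeast_Suc_atMost numeral_2_eq_2)
  ultimately show ?thesis
    by (simp add: bal_deriv_def)
qed

context
  fixes lam :: real
  assumes lam: "0 < lam"
begin

lemma bal_nonneg: "0 \<le> a \<Longrightarrow> 0 \<le> bal L lam a"
  using lam by (simp add: bal_def)

lemma bal_strict_mono:
  assumes "0 \<le> a" "a < b"
  shows "bal L lam a < bal L lam b"
proof -
  have "a * (a + lam) ^ (L - 1) \<le> a * (b + lam) ^ (L - 1)"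
    using assms lam by (intro mult_left_mono power_mono) auto
  also have "\<dots> < b * (b + lam) ^ (L - 1)"
    using assms lam by (intro mult_strict_right_mono) auto
  finally show ?thesis
    by (simp add: bal_def)
qed

lemma bal_ge: "1 \<le> a \<Longrightarrow> a \<le> bal L lam a"
  using lam mult_left_mono[OF one_le_power[of "a + lam" "L - 1"], of a] by (simp add: bal_def)

lemma ex1_bal_eq:
  assumes "0 \<le> y"
  shows "\<exists>!a. 0 \<le> a \<and> bal L lam a = y"
proof (rule ex_ex1I)
  have "\<exists>a\<ge>0. a \<le> max 1 y \<and> bal L lam a = y"
  proof (rule IVT')
    show "bal L lam 0 \<le> y"
      using assms by (simp add: bal_def)
    show "y \<le> bal L lam (max 1 y)"
      using bal_ge[of "max 1 y" L] by simp
  qed (simp_all add: continuous_on_bal)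
  then show "\<exists>a. 0 \<le> a \<and> bal L lam a = y"
    by blast
  show "a = b" if "0 \<le> a \<and> bal L lam a = y" "0 \<le> b \<and> bal L lam b = y" for a b
    using that bal_strict_mono[of a b L] bal_strict_mono[of b a L]
    by (cases a b rule: linorder_cases) auto
qed

lemma bal_inv_nonneg: "0 \<le> y \<Longrightarrow> 0 \<le> bal_inv L lam y"
  using theI'[OF ex1_bal_eq] by (simp add: bal_inv_def)

lemma bal_bal_inv: "0 \<le> y \<Longrightarrow> bal L lam (bal_inv L lam y) = y"
  using theI'[OF ex1_bal_eq] by (simp add: bal_inv_def)

lemma bal_inv_bal: "0 \<le> a \<Longrightarrow> bal_inv L lam (bal L lam a) = a"
  unfolding bal_inv_def by (rule the1_equality[OF ex1_bal_eq]) (auto simp: bal_nonneg)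

lemma continuous_on_bal_inv:
  assumes "0 \<le> c"
  shows "continuous_on {0..bal L lam c} (bal_inv L lam)"
proof -
  have "bal L lam ` {0..c} = {0..bal L lam c}"
  proof
    show "bal L lam ` {0..c} \<subseteq> {0..bal L lam c}"
      using bal_nonneg bal_strict_mono by (force simp: le_less)
    show "{0..bal L lam c} \<subseteq> bal L lam ` {0..c}"
    proof
      fix y
      assume y: "y \<in> {0..bal L lam c}"
      then have "bal_inv L lam y \<le> c"
        using bal_bal_inv[of y L] bal_inv_nonneg[of y L] bal_strict_mono[of c "bal_inv L lam y" L]
          assms
        by force
      then show "y \<in> bal L lam ` {0..c}"
        using bal_bal_inv[of y L] bal_inv_nonneg[of y L] y by (metis atLeastAtMost_iff image_eqI)
    qed
  qed
  moreover have "continuous_on (bal L lam ` {0..c}) (bal_inv L lam)"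
    using continuous_on_bal by (rule continuous_on_inv) (auto simp: bal_inv_bal)
  ultimately show ?thesis
    by simp
qed

lemma bal_deriv_pos: "0 \<le> a \<Longrightarrow> 0 < bal_deriv L lam a"
  using lam by (simp add: bal_deriv_def add_pos_nonneg)

lemma mirror_hess_pos: "0 < mirror_hess q L lam s"
  by (simp add: mirror_hess_def bal_deriv_pos bal_inv_nonneg)

lemma isCont_bal_inv_abs_powr:
  assumes "0 < q"
  shows "isCont (\<lambda>s. bal_inv L lam (\<bar>s\<bar> powr q)) s"
proof -
  define r where "r = \<bar>s\<bar> + 1"
  define c where "c = max 1 (r powr q)"
  have "(\<lambda>s. \<bar>s\<bar> powr q) ` {-r<..<r} \<subseteq> {0..bal L lam c}"
  proof clarsimp
    fix t
    assume "- r < t" "t < r"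
    then have "\<bar>t\<bar> powr q \<le> r powr q"
      using assms by (intro powr_mono2) auto
    also have "\<dots> \<le> bal L lam c"
      using bal_ge[of c L] by (simp add: c_def)
    finally show "\<bar>t\<bar> powr q \<le> bal L lam c" .
  qed
  moreover have "continuous_on {-r<..<r} (\<lambda>s. \<bar>s\<bar> powr q)"
    using assms by (intro continuous_on_powr' continuous_intros) auto
  moreover have "0 \<le> c"
    by (simp add: c_def)
  ultimately have "continuous_on {-r<..<r} (\<lambda>s. bal_inv L lam (\<bar>s\<bar> powr q))"
    using continuous_on_compose2[OF continuous_on_bal_inv] by blast
  moreover have "s \<in> {-r<..<r}"
    by (auto simp: r_def)
  ultimately show ?thesis
    by (simp add: continuous_on_eq_continuous_at)
qed

lemma continuous_mirror_hess:
  assumes "0 < q"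
  shows "continuous_on UNIV (mirror_hess q L lam)"
proof -
  have "isCont (bal_deriv L lam) a" for a
    unfolding bal_deriv_def[abs_def] by (intro continuous_intros)
  then have "isCont (\<lambda>s. bal_deriv L lam (bal_inv L lam (\<bar>s\<bar> powr q))) s" for s
    by (rule isCont_o2[OF isCont_bal_inv_abs_powr[OF assms]])
  moreover have "bal_deriv L lam (bal_inv L lam (\<bar>s\<bar> powr q)) \<noteq> 0" for s
    using bal_deriv_pos[OF bal_inv_nonneg, of "\<bar>s\<bar> powr q" L L] by simp
  ultimately show ?thesis
    unfolding mirror_hess_def continuous_on_eq_continuous_at[OF open_UNIV]
    by simp
qed

lemma mirror_hess_2: "mirror_hess q 2 lam s = 1 / sqrt (4 * \<bar>s\<bar> powr q + lam\<^sup>2)"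
proof -
  define a where "a = bal_inv 2 lam (\<bar>s\<bar> powr q)"
  have "0 \<le> a" "a * (a + lam) = \<bar>s\<bar> powr q"
    using bal_inv_nonneg[of "\<bar>s\<bar> powr q" 2] bal_bal_inv[of "\<bar>s\<bar> powr q" 2]
    by (simp_all add: a_def bal_def)
  then have "sqrt (4 * \<bar>s\<bar> powr q + lam\<^sup>2) = 2 * a + lam"
    using lam by (intro real_sqrt_unique) (auto simp: power2_eq_square algebra_simps)
  then show ?thesis
    by (simp add: mirror_hess_def bal_deriv_def a_def)
qed

lemma positive_density_mirror_hess: "0 < q \<Longrightarrow> positive_density (mirror_hess q L lam)"
  using continuous_mirror_hess mirror_hess_pos lam by unfold_locales

lemma bal_deriv_le:
  assumes "2 \<le> L" "0 \<le> a"
  shows "bal_deriv L lam a \<le> real L * (a + lam) ^ (L - 1)"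
proof -
  have "a * (a + lam) ^ (L - 2) \<le> (a + lam) * (a + lam) ^ (L - 2)"
    using assms lam by (intro mult_right_mono) auto
  also have "\<dots> = (a + lam) ^ (L - 1)"
    using assms(1) by (simp flip: power_Suc) (simp add: Suc_diff_Suc numeral_2_eq_2)
  finally have "real (L - 1) * (a * (a + lam) ^ (L - 2)) \<le> real (L - 1) * (a + lam) ^ (L - 1)"
    by (rule mult_left_mono) simp
  then show ?thesis
    using assms(1) by (simp add: bal_deriv_def mult.assoc of_nat_diff algebra_simps)
qed

lemma bal_power_le:
  assumes "2 \<le> L" "0 < q" "q * (real L - 1) \<le> real L" "0 \<le> a" "bal L lam a = \<bar>s\<bar> powr q"
  shows "(a + lam) ^ (L - 1) \<le> (1 + lam) ^ (L - 1) * (1 + \<bar>s\<bar>)"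
proof (cases "a \<le> 1")
  case True
  then have "(a + lam) ^ (L - 1) \<le> (1 + lam) ^ (L - 1)"
    using assms(4) lam by (intro power_mono) auto
  also have "\<dots> \<le> (1 + lam) ^ (L - 1) * (1 + \<bar>s\<bar>)"
    using lam by simp
  finally show ?thesis .
next
  case False
  then have "1 < a"
    by simp
  have "a ^ L = a * a ^ (L - 1)"
    using assms(1) by (simp flip: power_Suc)
  also have "\<dots> \<le> a * (a + lam) ^ (L - 1)"
    using assms(4) lam by (intro mult_left_mono power_mono) auto
  finally have aL: "a ^ L \<le> \<bar>s\<bar> powr q"
    using assms(5) by (simp add: bal_def)
  have "a ^ (L - 1) = a powr real (L - 1)"
    using \<open>1 < a\<close> by (simp add: powr_realpow)
  also have "\<dots> = a powr (real L - 1)"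
    using assms(1) by (simp add: of_nat_diff)
  also have "\<dots> \<le> a powr (real L / q)"
    using \<open>1 < a\<close> assms(2,3) by (intro powr_mono) (auto simp: field_simps)
  also have "\<dots> = (a ^ L) powr (1 / q)"
    using \<open>1 < a\<close> by (simp add: powr_powr flip: powr_realpow)
  also have "\<dots> \<le> (\<bar>s\<bar> powr q) powr (1 / q)"
    using aL assms(2) \<open>1 < a\<close> by (intro powr_mono2) auto
  also have "\<dots> = \<bar>s\<bar>"
    using assms(2) by (simp add: powr_powr)
  finally have "a ^ (L - 1) \<le> \<bar>s\<bar>" .
  have "(a + lam) ^ (L - 1) \<le> ((1 + lam) * a) ^ (L - 1)"
    using \<open>1 < a\<close> lam by (intro power_mono) (auto simp: algebra_simps)
  also have "\<dots> \<le> (1 + lam) ^ (L - 1) * \<bar>s\<bar>"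
    using \<open>a ^ (L - 1) \<le> \<bar>s\<bar>\<close> lam by (simp add: power_mult_distrib)
  also have "\<dots> \<le> (1 + lam) ^ (L - 1) * (1 + \<bar>s\<bar>)"
    using lam by (intro mult_left_mono) auto
  finally show ?thesis .
qed

lemma mirror_hess_ge:
  assumes "2 \<le> L" "0 < q" "q * (real L - 1) / real L \<le> 1"
  shows "\<exists>c>0. \<forall>s. c / (1 + \<bar>s\<bar>) \<le> mirror_hess q L lam s"
proof (intro exI conjI allI)
  define C where "C = real L * (1 + lam) ^ (L - 1)"
  show "0 < 1 / C"
    using assms(1) lam by (simp add: C_def)
  fix s
  define a where "a = bal_inv L lam (\<bar>s\<bar> powr q)"
  have a: "0 \<le> a" "bal L lam a = \<bar>s\<bar> powr q"
    using bal_inv_nonneg[of "\<bar>s\<bar> powr q" L] bal_bal_inv[of "\<bar>s\<bar> powr q" L]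
    by (simp_all add: a_def)
  have "bal_deriv L lam a \<le> real L * (a + lam) ^ (L - 1)"
    by (rule bal_deriv_le[OF assms(1) a(1)])
  also have "\<dots> \<le> C * (1 + \<bar>s\<bar>)"
    using bal_power_le[OF assms(1,2) _ a] assms
    by (simp add: C_def mult.assoc divide_le_eq mult.commute)
  finally show "1 / C / (1 + \<bar>s\<bar>) \<le> mirror_hess q L lam s"
    using bal_deriv_pos[OF a(1), of L]
    by (simp add: mirror_hess_def a_def[symmetric] divide_simps mult.commute)
qed

lemma bregman_fun_mirror_potential:
  assumes "2 \<le> L" "0 < q" "q * (real L - 1) / real L \<le> 1"
  shows "bregman_fun (\<lambda>x. ereal (mirror_potential q L lam x))"
proof -
  interpret positive_density "mirror_hess q L lam"
    using positive_density_mirror_hess[OF assms(2)] .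
  obtain c where c: "0 < c" "\<And>s. c / (1 + \<bar>s\<bar>) \<le> mirror_hess q L lam s"
    using mirror_hess_ge[OF assms] by blast
  show ?thesis
    by (intro bregman_fun_sep_potential antideriv_unbounded[OF continuous c])
qed

lemma legendre_fun_mirror_potential:
  "0 < q \<Longrightarrow> legendre_fun (\<lambda>x. ereal (mirror_potential q L lam x))"
  by (rule positive_density.legendre_fun_sep_potential[OF positive_density_mirror_hess])

lemma has_derivative_grad_mirror_potential_2:
  assumes "0 < q"
  shows "(grad (mirror_potential q 2 lam) has_derivative
    (\<lambda>h. \<chi> k. h $ k / sqrt (4 * \<bar>x $ k\<bar> powr q + lam\<^sup>2))) (at x)"
  using positive_density.has_derivative_grad_sep_potential[
      OF positive_density_mirror_hess[OF assms, of 2], where x = x]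
  by (simp add: mirror_hess_2)

end

section \<open>One coordinate of the steepest flow\<close>

locale product_flow =
  fixes L :: nat and q T :: real and g :: "real \<Rightarrow> real" and u :: "nat \<Rightarrow> real \<Rightarrow> real"
  assumes L: "2 \<le> L" and q: "1 \<le> q" and T: "0 < T"
    and g_cont: "continuous_on {0..T} g"
    and u_deriv: "\<And>i t. i \<in> {1..L} \<Longrightarrow> t \<in> {0..T} \<Longrightarrow>
      (u i has_real_derivative - sgn_powr q (g t * (\<Prod>j\<in>{1..L}-{i}. u j t))) (at t within {0..T})"
begin

lemma u_cont: "i \<in> {1..L} \<Longrightarrow> continuous_on {0..T} (u i)"
  using u_deriv by (rule DERIV_continuous_on)

lemma prod_remove_two:
  assumes "i \<in> {1..L}" "j \<in> {1..L}" "i \<noteq> j"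
  shows "(\<Prod>l\<in>{1..L}-{i}. u l s) = u j s * (\<Prod>l\<in>{1..L}-{i,j}. u l s)"
proof -
  have "{1..L} - {i} = insert j ({1..L} - {i,j})"
    using assms by auto
  then show ?thesis
    by simp
qed

(* If u_i crossed zero with nonzero speed, another
   factor u_j would have speed 1 on both sides of the crossing but speed 0 at it, which
   Darboux's theorem forbids (deriv_zero_imp_frequently_small). *)
lemma cofactor_zero_if_zero:
  assumes "q = 1" and i: "i \<in> {1..L}" and t: "t \<in> {0..T}" and "u i t = 0"
  shows "g t * (\<Prod>j\<in>{1..L}-{i}. u j t) = 0"
proof (rule ccontr)
  assume nz: "g t * (\<Prod>j\<in>{1..L}-{i}. u j t) \<noteq> 0"
  obtain j where j: "j \<in> {1..L}" "j \<noteq> i"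
    by (rule that[of "if i = 1 then 2 else 1"]) (use L i in auto)
  define h where "h s = g s * (\<Prod>l\<in>{1..L}-{i,j}. u l s)" for s
  have cofactor_j: "(\<Prod>l\<in>{1..L}-{j}. u l s) = u i s * (\<Prod>l\<in>{1..L}-{i,j}. u l s)" for s
    using prod_remove_two[OF j(1) i j(2)] by (simp add: insert_commute)
  have "h t \<noteq> 0"
    using nz prod_remove_two[OF i j(1)] j(2) by (auto simp: h_def)
  have "continuous_on {0..T} h"
    unfolding h_def using u_cont by (intro continuous_intros g_cont) auto
  then have "\<forall>\<^sub>F s in at t within {0..T}. h s \<noteq> 0"
    using t \<open>h t \<noteq> 0\<close> by (intro tendsto_imp_eventually_ne) (auto simp: continuous_on_def)
  moreover have "\<forall>\<^sub>F s in at t within {0..T}. u i s \<noteq> 0"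
  proof -
    have "((\<lambda>s. (u i s - u i t) / (s - t)) \<longlongrightarrow> - sgn (g t * (\<Prod>j\<in>{1..L}-{i}. u j t)))
        (at t within {0..T})"
      using u_deriv[OF i t] \<open>q = 1\<close> by (simp add: has_field_derivative_iff)
    moreover have "- sgn (g t * (\<Prod>j\<in>{1..L}-{i}. u j t)) \<noteq> 0"
      using nz by (simp add: sgn_zero_iff)
    ultimately have "\<forall>\<^sub>F s in at t within {0..T}. (u i s - u i t) / (s - t) \<noteq> 0"
      by (rule tendsto_imp_eventually_ne)
    then show ?thesis
      by eventually_elim (use \<open>u i t = 0\<close> in simp)
  qed
  ultimately have "\<forall>\<^sub>F s in at t within {0..T}. \<not> \<bar>- sgn (g s * (\<Prod>l\<in>{1..L}-{j}. u l s))\<bar> < 1"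
    by eventually_elim (unfold cofactor_j, simp add: h_def abs_sgn_eq)
  moreover have "\<exists>\<^sub>F s in at t within {0..T}. \<bar>- sgn (g s * (\<Prod>l\<in>{1..L}-{j}. u l s))\<bar> < 1"
  proof (rule deriv_zero_imp_frequently_small[OF T t])
    show "(u j has_real_derivative - sgn (g s * (\<Prod>l\<in>{1..L}-{j}. u l s))) (at s within {0..T})"
      if "s \<in> {0..T}" for s
      using u_deriv[OF j(1) that] \<open>q = 1\<close> by simp
    show "- sgn (g t * (\<Prod>l\<in>{1..L}-{j}. u l t)) = 0"
      using \<open>u i t = 0\<close> cofactor_j by simp
  qed simp
  ultimately show False
    by (simp add: frequently_def)
qed

lemma abs_powr_has_derivative:
  assumes i: "i \<in> {1..L}" and t: "t \<in> {0..T}"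
  shows "((\<lambda>s. \<bar>u i s\<bar> powr q) has_real_derivative - q * sgn_powr q (g t * (\<Prod>j\<in>{1..L}. u j t)))
    (at t within {0..T})"
proof -
  have prod: "(\<Prod>j\<in>{1..L}. u j t) = u i t * (\<Prod>j\<in>{1..L}-{i}. u j t)"
    using i by (simp add: prod.remove)
  show ?thesis
  proof (cases "u i t \<noteq> 0 \<or> 1 < q")
    case True
    from DERIV_chain2[OF has_real_derivative_abs_powr[OF True] u_deriv[OF i t]] show ?thesis
      unfolding prod by (simp add: sgn_powr_mult mult_ac)
  next
    case False
    then have "q = 1" "u i t = 0"
      using q by auto
    then have "g t * (\<Prod>j\<in>{1..L}-{i}. u j t) = 0"
      by (intro cofactor_zero_if_zero i t)
    then have "(u i has_real_derivative 0) (at t within {0..T})"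
      using u_deriv[OF i t] by (simp only: sgn_powr_def) simp
    then show ?thesis
      unfolding prod using has_real_derivative_abs_at_zero \<open>q = 1\<close> \<open>u i t = 0\<close> by simp
  qed
qed

lemma abs_powr_diff_const:
  assumes "i \<in> {1..L}" "j \<in> {1..L}" "t \<in> {0..T}"
  shows "\<bar>u j t\<bar> powr q - \<bar>u i t\<bar> powr q = \<bar>u j 0\<bar> powr q - \<bar>u i 0\<bar> powr q"
proof -
  have "((\<lambda>s. \<bar>u j s\<bar> powr q - \<bar>u i s\<bar> powr q) has_real_derivative 0) (at s within {0..T})"
    if "s \<in> {0..T}" for s
    using DERIV_diff[OF abs_powr_has_derivative[OF assms(2) that]
        abs_powr_has_derivative[OF assms(1) that]]
    by simp
  then obtain c where "\<forall>s\<in>{0..T}. \<bar>u j s\<bar> powr q - \<bar>u i s\<bar> powr q = c"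
    using has_field_derivative_zero_constant[of "{0..T}"] by blast
  then show ?thesis
    using assms(3) T by simp
qed

end

locale balanced_product_flow = product_flow +
  fixes lam :: real
  assumes lam: "0 < lam"
    and balanced: "\<And>j. j \<in> {2..L} \<Longrightarrow> \<bar>u j 0\<bar> powr q - \<bar>u 1 0\<bar> powr q = lam"
begin

lemma abs_powr_balanced: "j \<in> {2..L} \<Longrightarrow> t \<in> {0..T} \<Longrightarrow> \<bar>u j t\<bar> powr q = \<bar>u 1 t\<bar> powr q + lam"
  using abs_powr_diff_const[of 1 j t] balanced[of j] L by simp

lemma abs_powr_prod:
  assumes "t \<in> {0..T}"
  shows "\<bar>\<Prod>j\<in>{1..L}. u j t\<bar> powr q = bal L lam (\<bar>u 1 t\<bar> powr q)"
  unfolding abs_prod prod_powr_distrib using L abs_powr_balanced[OF _ assms]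
  by (intro prod_balanced) auto

lemma prod_has_derivative:
  assumes t: "t \<in> {0..T}"
  shows "((\<lambda>s. \<Prod>j\<in>{1..L}. u j s) has_real_derivative
    - sgn_powr q (g t) * bal_deriv L lam (\<bar>u 1 t\<bar> powr q)) (at t within {0..T})"
proof -
  have "((\<lambda>s. \<Prod>j\<in>{1..L}. u j s) has_derivative
      (\<lambda>y. \<Sum>i\<in>{1..L}. - sgn_powr q (g t * (\<Prod>j\<in>{1..L}-{i}. u j t)) * y * (\<Prod>j\<in>{1..L}-{i}. u j t)))
      (at t within {0..T})"
    using u_deriv[OF _ t] unfolding has_field_derivative_def by (rule has_derivative_prod)
  then have "((\<lambda>s. \<Prod>j\<in>{1..L}. u j s) has_real_derivative
      (\<Sum>i\<in>{1..L}. - sgn_powr q (g t * (\<Prod>j\<in>{1..L}-{i}. u j t)) * (\<Prod>j\<in>{1..L}-{i}. u j t)))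
      (at t within {0..T})"
    unfolding has_field_derivative_def
    by (rule has_derivative_eq_rhs) (simp add: fun_eq_iff sum_distrib_left mult_ac)
  also have "(\<Sum>i\<in>{1..L}. - sgn_powr q (g t * (\<Prod>j\<in>{1..L}-{i}. u j t)) * (\<Prod>j\<in>{1..L}-{i}. u j t))
      = - sgn_powr q (g t) * (\<Sum>i\<in>{1..L}. \<Prod>j\<in>{1..L}-{i}. \<bar>u j t\<bar> powr q)"
    by (simp add: sgn_powr_mult mult.assoc sgn_powr_mult_self abs_prod prod_powr_distrib
        sum_distrib_left)
  also have "(\<Sum>i\<in>{1..L}. \<Prod>j\<in>{1..L}-{i}. \<bar>u j t\<bar> powr q) = bal_deriv L lam (\<bar>u 1 t\<bar> powr q)"
    using L abs_powr_balanced[OF _ t] by (intro sum_cofactors_balanced) auto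
  finally show ?thesis .
qed

lemma mirror_grad_has_derivative:
  assumes t: "t \<in> {0..T}"
  shows "((\<lambda>s. antideriv (mirror_hess q L lam) (\<Prod>j\<in>{1..L}. u j s)) has_real_derivative
    - sgn_powr q (g t)) (at t within {0..T})"
proof -
  interpret positive_density "mirror_hess q L lam"
    using positive_density_mirror_hess lam q by simp
  have "mirror_hess q L lam (\<Prod>j\<in>{1..L}. u j t) = 1 / bal_deriv L lam (\<bar>u 1 t\<bar> powr q)"
    using abs_powr_prod[OF t] lam by (simp add: mirror_hess_def bal_inv_bal)
  moreover have "bal_deriv L lam (\<bar>u 1 t\<bar> powr q) \<noteq> 0"
    using bal_deriv_pos[OF lam] by (simp add: less_imp_neq[symmetric])
  ultimately show ?thesis
    using DERIV_chain2[OF deriv_antideriv prod_has_derivative[OF t]] by simp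
qed

end

section \<open>The mirror flow\<close>

lemma prodw_nth: "prodw L ws $ k = (\<Prod>i\<in>{1..L}. ws i $ k)"
  by (simp add: prodw_def)

lemma grad_prodw_update:
  fixes f :: "real^'n \<Rightarrow> real" and ws :: "nat \<Rightarrow> real^'n"
  assumes "f differentiable (at (prodw L ws))" and i: "i \<in> {1..L}"
  shows "grad (\<lambda>v. f (prodw L (ws(i := v)))) (ws i) =
    (\<chi> k. grad f (prodw L ws) $ k * (\<Prod>j\<in>{1..L}-{i}. ws j $ k))"
proof -
  define c where "c = (\<chi> k. \<Prod>j\<in>{1..L}-{i}. ws j $ k)"
  define l where "l v = (\<chi> k. v $ k * c $ k)" for v :: "real^'n"
  have prodw_update: "prodw L (ws(i := v)) = l v" for v
  proof -
    have "(\<Prod>j\<in>{1..L}. (ws(i := v)) j $ k) = v $ k * (\<Prod>j\<in>{1..L}-{i}. ws j $ k)" for k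
    proof -
      have "(\<Prod>j\<in>{1..L}. (ws(i := v)) j $ k) = v $ k * (\<Prod>j\<in>{1..L}-{i}. (ws(i := v)) j $ k)"
        using i by (simp add: prod.remove fun_upd_same del: fun_upd_apply)
      also have "(\<Prod>j\<in>{1..L}-{i}. (ws(i := v)) j $ k) = (\<Prod>j\<in>{1..L}-{i}. ws j $ k)"
        by (rule prod.cong) auto
      finally show ?thesis .
    qed
    then show ?thesis
      by (simp add: prodw_def l_def c_def vec_eq_iff del: fun_upd_apply)
  qed
  have "(l has_derivative l) (at v)" for v
    unfolding l_def
    by (intro has_derivative_vecI)
      (simp add: has_derivative_comp_vec_nth mult.commute[of _ "c $ _"])
  moreover have "f differentiable (at (l (ws i)))"
    using assms(1) prodw_update[of "ws i"] by simp
  ultimately have "((\<lambda>v. f (l v)) has_derivative (\<lambda>h. grad f (l (ws i)) \<bullet> l h)) (at (ws i))"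
    by (rule has_derivative_compose[OF _ has_derivative_grad])
  moreover have "grad f (l (ws i)) \<bullet> l h = (\<chi> k. grad f (prodw L ws) $ k * c $ k) \<bullet> h" for h
    using prodw_update[of "ws i"] by (simp add: l_def inner_vec_def mult_ac)
  ultimately show ?thesis
    unfolding prodw_update c_def by (intro grad_eqI) simp
qed

lemma steepest_flow_mirror_within:
  fixes f :: "real^'n \<Rightarrow> real" and w :: "real \<Rightarrow> nat \<Rightarrow> real^'n"
  assumes q: "1 \<le> q" and L: "2 \<le> L" and lam: "0 < lam" and T: "0 < T"
    and f_diff: "\<And>x. f differentiable (at x)" and f_grad: "continuous_on UNIV (grad f)"
    and balanced: "\<And>j k. j \<in> {2..L} \<Longrightarrow> \<bar>w 0 j $ k\<bar> powr q - \<bar>w 0 1 $ k\<bar> powr q = lam"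
    and flow: "\<And>i t. i \<in> {1..L} \<Longrightarrow> t \<in> {0..T} \<Longrightarrow>
      ((\<lambda>s. w s i) has_vector_derivative - stp q (grad (\<lambda>v. f (prodw L ((w t)(i := v)))) (w t i)))
        (at t within {0..T})"
    and t: "t \<in> {0..T}"
  shows "((\<lambda>s. grad (mirror_potential q L lam) (prodw L (w s))) has_vector_derivative
    - stp q (grad f (prodw L (w t)))) (at t within {0..T})"
proof -
  interpret positive_density "mirror_hess q L lam"
    using positive_density_mirror_hess lam q by simp
  have u_deriv: "((\<lambda>s. w s i $ k) has_real_derivative
      - sgn_powr q (grad f (prodw L (w t)) $ k * (\<Prod>j\<in>{1..L}-{i}. w t j $ k))) (at t within {0..T})"
    if "i \<in> {1..L}" "t \<in> {0..T}" for i k t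
    using has_real_derivative_vec_nth[OF flow[OF that], of k] grad_prodw_update[OF f_diff that(1)]
    by (simp add: stp_nth)
  have "continuous_on {0..T} (\<lambda>s. prodw L (w s))"
    unfolding prodw_def using u_deriv
    by (intro continuous_on_vec_lambda continuous_on_prod DERIV_continuous_on) blast+
  then have g_cont: "continuous_on {0..T} (\<lambda>s. grad f (prodw L (w s)) $ k)" for k
    by (intro continuous_on_component continuous_on_compose2[OF f_grad]) auto
  show ?thesis
    unfolding grad_sep_potential
  proof (rule has_vector_derivative_vecI)
    fix k
    interpret balanced_product_flow L q T "\<lambda>s. grad f (prodw L (w s)) $ k" "\<lambda>i s. w s i $ k" lam
      using q L T g_cont u_deriv lam balanced by unfold_locales (simp_all add: prodw_nth)
    show "((\<lambda>s. (\<chi> k. antideriv (mirror_hess q L lam) (prodw L (w s) $ k)) $ k) has_real_derivative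
        (- stp q (grad f (prodw L (w t)))) $ k) (at t within {0..T})"
      using mirror_grad_has_derivative[OF t] by (simp add: prodw_nth stp_nth)
  qed
qed

lemma AE_lebesgue_Icc_if_interior:
  fixes a b :: real
  assumes "\<And>t. a < t \<Longrightarrow> t < b \<Longrightarrow> P t"
  shows "AE t in lebesgue. t \<in> {a..b} \<longrightarrow> P t"
proof -
  have "AE t in lebesgue. t \<noteq> a" "AE t in lebesgue. t \<noteq> b"
    by (intro AE_completion AE_lborel_singleton)+
  then show ?thesis
  proof eventually_elim
    case (elim t)
    then show ?case
      using assms[of t] by (auto simp: less_le)
  qed
qed

lemma mirror_potential_flow_ae:
  fixes f :: "real^'n \<Rightarrow> real" and w :: "real \<Rightarrow> nat \<Rightarrow> real^'n"
  assumes q: "1 \<le> q" and L: "2 \<le> L" and lam: "0 < lam" and T: "0 < T"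
    and f_diff: "\<And>x. f differentiable (at x)" and f_grad: "continuous_on UNIV (grad f)"
    and balanced: "\<And>j k. j \<in> {2..L} \<Longrightarrow> \<bar>w 0 j $ k\<bar> powr q - \<bar>w 0 1 $ k\<bar> powr q = lam"
    and flow: "\<And>i t. i \<in> {1..L} \<Longrightarrow> t \<in> {0..T} \<Longrightarrow>
      ((\<lambda>s. w s i) has_vector_derivative - stp q (grad (\<lambda>v. f (prodw L ((w t)(i := v)))) (w t i)))
        (at t within {0..T})"
  shows "AE t in lebesgue. t \<in> {0..T} \<longrightarrow>
    mirror_potential q L lam differentiable (at (prodw L (w t))) \<and>
    ((\<lambda>s. grad (mirror_potential q L lam) (prodw L (w s))) has_vector_derivative
      - stp q (grad f (prodw L (w t)))) (at t)"
proof (rule AE_lebesgue_Icc_if_interior, intro conjI)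
  have "0 < q"
    using q by simp
  then show "mirror_potential q L lam differentiable (at (prodw L (w t)))" for t
    by (rule positive_density.differentiable_sep_potential[OF positive_density_mirror_hess[OF lam]])
  show "((\<lambda>s. grad (mirror_potential q L lam) (prodw L (w s))) has_vector_derivative
      - stp q (grad f (prodw L (w t)))) (at t)" if "0 < t" "t < T" for t
    using steepest_flow_mirror_within[OF assms, of t] that by (simp add: at_within_Icc_at)
qed

theorem theorem3:
  fixes q lam :: real and L :: nat and w0 :: "nat \<Rightarrow> real^'n"
  assumes "1 \<le> q" "q \<le> 2" "L \<ge> 2" "lam > 0"
    and balanced: "\<forall>j\<in>{2..L}. \<forall>k. \<bar>w0 j $ k\<bar> powr q - \<bar>w0 1 $ k\<bar> powr q = lam"
  shows "\<exists>R :: real^'n \<Rightarrow> real. separable R \<and>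
    (\<forall>(f :: real^'n \<Rightarrow> real) (T :: real) (w :: real \<Rightarrow> nat \<Rightarrow> real^'n).
       (\<forall>x. f differentiable (at x)) \<and> continuous_on UNIV (grad f) \<and> T > 0 \<and>
       (\<forall>i\<in>{1..L}. w 0 i = w0 i) \<and>
       (\<forall>i\<in>{1..L}. \<forall>t\<in>{0..T}.
          ((\<lambda>s. w s i) has_vector_derivative
             (- stp q (grad (\<lambda>v. f (prodw L ((w t)(i := v)))) (w t i)))) (at t within {0..T}))
       \<longrightarrow>
       (AE t in lebesgue. t \<in> {0..T} \<longrightarrow>
          R differentiable (at (prodw L (w t))) \<and>
          ((\<lambda>s. grad R (prodw L (w s))) has_vector_derivative
             (- stp q (grad f (prodw L (w t))))) (at t))) \<and>
    (q * (real L - 1) / real L \<le> 1 \<longrightarrow>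
       bregman_fun (\<lambda>x. ereal (R x)) \<and> legendre_fun (\<lambda>x. ereal (R x))) \<and>
    (L = 2 \<longrightarrow> (\<forall>x. (grad R has_derivative
       (\<lambda>h. \<chi> k. h $ k / sqrt (4 * \<bar>x $ k\<bar> powr q + lam\<^sup>2))) (at x)))"
proof -
  have "0 < q"
    using assms(1) by simp
  show ?thesis
    apply (intro exI[of _ "mirror_potential q L lam"] conjI allI impI)
    subgoal
      by (rule separable_sep_potential)
    subgoal for f T w
      using assms(3) balanced by (intro mirror_potential_flow_ae[OF assms(1,3,4)]) auto
    subgoal
      by (rule bregman_fun_mirror_potential[OF assms(4,3) \<open>0 < q\<close>])
    subgoal
      by (rule legendre_fun_mirror_potential[OF assms(4) \<open>0 < q\<close>])
    subgoal for x
      using has_derivative_grad_mirror_potential_2[OF assms(4) \<open>0 < q\<close>] by simp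
    done
qed

end
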